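(* Let $H=(v_1,\dots,v_6)$ be an embedded equilateral hexagon, considered up to translations and rotations, whose action-angle coordinates $(d_1,d_2,d_3,\theta_1,\theta_2,\theta_3)$ for the $T_{135}$ triangulation are defined. If the Joint Chirality-Curl satisfies $J(H)=(1,1)$ or $J(H)=(-1,1)$, then $\theta_i\in(0,\pi)$ for $i=1,2,3$.
   Context: An equilateral hexagon is an ordered 6-tuple $H=(v_1,\dots,v_6)$ in $\mathbb{R}^3$ with $\|v_i-v_{i+1}\|=1$ (indices mod 6), edges $e_i=[v_i,v_{i+1}]$, oriented $v_1\to v_2\to\cdots\to v_6\to v_1$; embedded means non-adjacent edges are disjoint and adjacent ones meet only at their common endpoint. Standard position: $v_1=0$, $v_3$ on the positive $x$-axis, $v_5$ in the $xy$-plane with positive $y$-coordinate. Action-angle coordinates ($T_{135}$ triangulation), defined when $v_1,v_3,v_5$ are not collinear and $0<d_i<2$: $d_1=\|v_3-v_1\|$, $d_2=\|v_5-v_3\|$, $d_3=\|v_1-v_5\|$; with $m_1,m_2,m_3$ the midpoints of $[v_1,v_3],[v_3,v_5],[v_5,v_1]$, $u_1,u_2,u_3$ the unit vectors in the $xy$-plane perpendicular to these segments pointing toward the opposite vertex of triangle $v_1v_3v_5$ (toward $v_5,v_1,v_3$ respectively), and $e_z=(0,0,1)$, the angles $\theta_i\in[0,2\pi)$ are determined by $v_{2i}=m_i+\tfrac12\sqrt{4-d_i^2}(\cos\theta_i\,u_i+\sin\theta_i\,e_z)$ (regular planar hexagon: all $\theta_i=\pi$). Joint Chirality-Curl: $curl(H)=\operatorname{sign}\big((v_3-v_1)\times(v_5-v_1)\cdot(v_2-v_1)\big)$.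 For $i=2,4,6$, $T_i$ is the open triangular disk with vertices $v_{i-1},v_i,v_{i+1}$, oriented by the right-hand rule (normal $(v_i-v_{i-1})\times(v_{i+1}-v_i)$), and $\Delta_i$ is the algebraic intersection number of $T_i$ with the oriented polygon $H$. Then $J(H)=(\Delta_2\Delta_4\Delta_6,\ \Delta_2^2\Delta_4^2\Delta_6^2\,curl(H))$. (By Calvo, $J(H)=(1,c)$ iff $H$ is a right-handed trefoil with curl $c$, $(-1,c)$ iff left-handed trefoil with curl $c$, $(0,0)$ iff unknot.) *)

theory Defs
  imports "HOL-Analysis.Analysis" "HOL-Analysis.Cross3"
begin

type_synonym hexagon = "nat \<Rightarrow> real^3"
  \<comment> \<open>A hexagon H is given by its vertices v_i = H i for i = 1..6; other values are irrelevant.\<close>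

definition nxt :: "nat \<Rightarrow> nat" where
  "nxt j = (if j = 6 then 1 else j + 1)"

definition edge :: "hexagon \<Rightarrow> nat \<Rightarrow> (real^3) set" where
  "edge H j = closed_segment (H j) (H (nxt j))"

definition equilateral_hexagon :: "hexagon \<Rightarrow> bool" where
  "equilateral_hexagon H \<longleftrightarrow> (\<forall>j\<in>{1..6}. dist (H j) (H (nxt j)) = 1)"

definition embedded_hexagon :: "hexagon \<Rightarrow> bool" where
  "embedded_hexagon H \<longleftrightarrow>
     (\<forall>j\<in>{1..6}. \<forall>k\<in>{1..6}. j \<noteq> k \<longrightarrow>
        (if k = nxt j then edge H j \<inter> edge H k = {H k}
         else if j = nxt k then edge H j \<inter> edge H k = {H j}
         else edge H j \<inter> edge H k = {}))"

definition tri_disk :: "hexagon \<Rightarrow> nat \<Rightarrow> (real^3) set" where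
  "tri_disk H i = rel_interior (convex hull {H (i - 1), H i, H (nxt i)})"

definition tri_normal :: "hexagon \<Rightarrow> nat \<Rightarrow> real^3" where
  "tri_normal H i = cross3 (H i - H (i - 1)) (H (nxt i) - H i)"

text \<open>Local weight of a crossing at parameter s of an edge: interior crossings count 1,
  crossings at an endpoint count 1/2 (so a crossing through a vertex is counted once
  in total by the two edges sharing it, and a touching vertex contributes 0).\<close>
definition cross_weight :: "real \<Rightarrow> real" where
  "cross_weight s = (if 0 < s \<and> s < 1 then 1 else if s = 0 \<or> s = 1 then 1/2 else 0)"

text \<open>Signed contribution of edge e_j = [v_j, v_(j+1)] to the algebraic intersection
  number of the oriented triangle T_i with the oriented polygon.\<close>
definition edge_contrib :: "hexagon \<Rightarrow> nat \<Rightarrow> nat \<Rightarrow> real" where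
  "edge_contrib H i j =
    (let a = H j; b = H (nxt j); N = tri_normal H i; \<delta> = (b - a) \<bullet> N in
     if \<delta> = 0 then 0 else
       (let s = ((H i - a) \<bullet> N) / \<delta>; p = a + s *\<^sub>R (b - a) in
        if p \<in> tri_disk H i then sgn \<delta> * cross_weight s else 0))"

definition Delta :: "hexagon \<Rightarrow> nat \<Rightarrow> real" where
  "Delta H i = (\<Sum>j\<in>{1..6}. edge_contrib H i j)"

definition curl :: "hexagon \<Rightarrow> real" where
  "curl H = sgn ((cross3 (H 3 - H 1) (H 5 - H 1)) \<bullet> (H 2 - H 1))"

definition JCC :: "hexagon \<Rightarrow> real \<times> real" where
  "JCC H = (Delta H 2 * Delta H 4 * Delta H 6,
            (Delta H 2)\<^sup>2 * (Delta H 4)\<^sup>2 * (Delta H 6)\<^sup>2 * curl H)"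

definition standard_position :: "hexagon \<Rightarrow> bool" where
  "standard_position G \<longleftrightarrow>
     G 1 = 0 \<and> G 3 $ 1 > 0 \<and> G 3 $ 2 = 0 \<and> G 3 $ 3 = 0 \<and>
     G 5 $ 2 > 0 \<and> G 5 $ 3 = 0"

definition perp_unit :: "real^3 \<Rightarrow> real^3 \<Rightarrow> real^3 \<Rightarrow> real^3" where
  "perp_unit a b c =
    (let m = midpoint a b; w = (c - m) - (((c - m) \<bullet> (b - a)) / ((b - a) \<bullet> (b - a))) *\<^sub>R (b - a)
     in (1 / norm w) *\<^sub>R w)"

text \<open>theta is the dihedral angle of the vertex p over the diagonal [a,b] (opposite vertex c):
  p = m + (1/2) sqrt(4 - d^2) (cos theta u + sin theta e_z), theta in [0, 2 pi).\<close>
definition is_aa_angle :: "real^3 \<Rightarrow> real^3 \<Rightarrow> real^3 \<Rightarrow> real^3 \<Rightarrow> real \<Rightarrow> bool" where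
  "is_aa_angle a b c p \<theta> \<longleftrightarrow>
     0 \<le> \<theta> \<and> \<theta> < 2 * pi \<and>
     p = midpoint a b + ((1/2) * sqrt (4 - (dist a b)\<^sup>2)) *\<^sub>R
           (cos \<theta> *\<^sub>R perp_unit a b c + sin \<theta> *\<^sub>R axis 3 1)"

end

theory Submission
  imports Defs
begin

text \<open>All quantities involved are invariant under the rigid motion, so we may work with the
  hexagon G in standard position, where v1, v3, v5 lie in the plane z = 0 and \<theta>i lies in
  (0, \<pi>) exactly when v2i lies strictly above that plane. The condition J(H) = (\<plusminus>1, 1)
  forces \<Delta>2, \<Delta>4, \<Delta>6 \<noteq> 0 and curl = 1, i.e. v2 lies above the plane. A triangle Ti
  whose apex is strictly on one side of the plane while every other vertex is weakly on the
  other side meets no edge of the polygon; a triangle Ti lying in the plane is only touched by the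
  polygon at the opposite odd vertex, where the half-weights of the two incident edges cancel.
  Either situation gives \<Delta>i = 0, which leaves only v4 and v6 strictly above the plane.\<close>

lemma hexagon_indices: "{1..6::nat} = {1, 2, 3, 4, 5, 6}"
  by auto

lemma nxt_simps [simp]:
  "nxt 1 = 2" "nxt (Suc 0) = 2" "nxt 2 = 3" "nxt 3 = 4" "nxt 4 = 5" "nxt 5 = 6" "nxt 6 = 1"
  by (simp_all add: nxt_def)

lemma nxt_mem: "j \<in> {1..6} \<Longrightarrow> nxt j \<in> {1..6}"
  by (auto simp: nxt_def)

lemma sum_hexagon_cycle:
  fixes g :: "nat \<Rightarrow> 'a::comm_monoid_add"
  assumes "a \<in> {1..6}" "nxt a = b" "nxt b = c" "nxt c = d" "nxt d = e" "nxt e = f"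
  shows "(\<Sum>j\<in>{1..6}. g j) = g a + g b + g c + g d + g e + g f"
  using assms(1) unfolding hexagon_indices assms(2-6)[symmetric]
  by (auto simp: ac_simps)

lemma rel_interior_triangle_inner_gt:
  fixes w :: "'a::euclidean_space"
  assumes p: "p \<in> rel_interior (convex hull {a, b, c})"
    and "w \<bullet> a \<ge> k" "w \<bullet> b \<ge> k" "w \<bullet> c \<ge> k"
    and "w \<bullet> a > k \<or> w \<bullet> b > k \<or> w \<bullet> c > k"
  shows "w \<bullet> p > k"
proof -
  let ?S = "convex hull {a, b, c}"
  have sub: "?S \<subseteq> {x. w \<bullet> x \<ge> k}"
    by (rule hull_minimal) (use assms in \<open>auto simp: convex_halfspace_ge\<close>)
  have face: "(?S \<inter> {x. w \<bullet> x = k}) face_of ?S"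
    by (rule face_of_Int_supporting_hyperplane_ge) (use sub in \<open>auto simp: convex_convex_hull\<close>)
  have "a \<in> ?S" "b \<in> ?S" "c \<in> ?S"
    by (auto intro: hull_inc)
  then have "?S \<inter> {x. w \<bullet> x = k} \<noteq> ?S"
    using assms(5) by auto
  then have "p \<notin> ?S \<inter> {x. w \<bullet> x = k}"
    using face_of_disjoint_rel_interior[OF face] p by blast
  moreover have "p \<in> ?S"
    using p rel_interior_subset by blast
  ultimately show ?thesis
    using sub by force
qed

lemma isosceles_base_vertex_notin_rel_interior:
  fixes a b c :: "'a::euclidean_space"
  assumes "dist c a = dist c b" "a \<noteq> b"
  shows "a \<notin> rel_interior (convex hull {a, c, b})"
proof
  assume a: "a \<in> rel_interior (convex hull {a, c, b})"
  let ?w = "b - a"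
  have "(c - a) \<bullet> (c - a) = (c - b) \<bullet> (c - b)"
    using assms(1) by (simp add: dist_norm flip: power2_norm_eq_inner)
  then have "2 * (?w \<bullet> (c - a)) = ?w \<bullet> ?w"
    by (simp add: inner_diff_left inner_diff_right inner_commute algebra_simps)
  moreover have "?w \<bullet> ?w > 0"
    using assms(2) by simp
  ultimately have "?w \<bullet> a < ?w \<bullet> a"
    by (intro rel_interior_triangle_inner_gt[OF a])
      (auto simp: inner_diff_left inner_diff_right inner_commute)
  then show False
    by simp
qed

lemma orthogonal_transformation_matrix_vector:
  fixes R :: "real^'n^'n"
  shows "orthogonal_matrix R \<Longrightarrow> orthogonal_transformation (\<lambda>x. R *v x)"
  by (simp add: orthogonal_transformation_matrix)

lemma tri_disk_rigid_motion:
  fixes R :: "real^3^3"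
  assumes R: "orthogonal_matrix R"
    and G: "\<forall>k\<in>{i - 1, i, nxt i}. G k = R *v H k + t"
  shows "tri_disk G i = (\<lambda>x. t + R *v x) ` tri_disk H i"
proof -
  let ?L = "\<lambda>x. R *v x"
  have L: "bounded_linear ?L" "inj ?L"
    using orthogonal_transformation_matrix_vector[OF R]
    by (auto simp: linear_linear orthogonal_transformation_inj)
  have "{G (i - 1), G i, G (nxt i)} = (\<lambda>x. t + x) ` ?L ` {H (i - 1), H i, H (nxt i)}"
    using G by (simp add: add.commute)
  then have "tri_disk G i = rel_interior ((\<lambda>x. t + x) ` ?L ` (convex hull {H (i - 1), H i, H (nxt i)}))"
    by (simp only: tri_disk_def convex_hull_translation
        convex_hull_linear_image[OF matrix_vector_mul_linear])
  also have "\<dots> = (\<lambda>x. t + x) ` ?L ` tri_disk H i"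
    by (simp only: tri_disk_def rel_interior_translation rel_interior_injective_linear_image[OF L])
  finally show ?thesis
    by (simp add: image_image)
qed

lemma edge_contrib_rigid_motion:
  fixes R :: "real^3^3"
  assumes R: "orthogonal_matrix R" "det R = 1"
    and G: "\<forall>k\<in>{i - 1, i, nxt i, j, nxt j}. G k = R *v H k + t"
  shows "edge_contrib G i j = edge_contrib H i j"
proof -
  have inner: "(R *v x) \<bullet> (R *v y) = x \<bullet> y" for x y
    using orthogonal_transformation_matrix_vector[OF R(1)]
    by (simp add: orthogonal_transformation_def)
  have diff: "G k - G l = R *v (H k - H l)" if "k \<in> {i - 1, i, nxt i, j, nxt j}"
    "l \<in> {i - 1, i, nxt i, j, nxt j}" for k l
  proof -
    have "G k = R *v H k + t" "G l = R *v H l + t"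
      using G that by blast+
    then show ?thesis
      by (simp add: matrix_vector_mult_diff_distrib)
  qed
  have normal: "tri_normal G i = R *v tri_normal H i"
    using R by (simp add: tri_normal_def diff cross_rotation_matrix rotation_matrix_def)
  have point: "G j + s *\<^sub>R (G (nxt j) - G j) = t + R *v (H j + s *\<^sub>R (H (nxt j) - H j))" for s
    using G by (simp add: matrix_vector_right_distrib matrix_vector_mult_diff_distrib
        matrix_vector_mult_scaleR)
  have inj: "inj (\<lambda>x. t + R *v x)"
    using orthogonal_transformation_inj[OF orthogonal_transformation_matrix_vector[OF R(1)]]
    by (simp add: inj_def)
  have image: "tri_disk G i = (\<lambda>x. t + R *v x) ` tri_disk H i"
    using G by (intro tri_disk_rigid_motion[OF R(1)]) auto
  have disk: "t + R *v x \<in> tri_disk G i \<longleftrightarrow> x \<in> tri_disk H i" for x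
    unfolding image using inj_image_mem_iff[OF inj, of x] by simp
  show ?thesis
    unfolding edge_contrib_def Let_def point disk normal
    by (simp add: diff inner)
qed

lemma Delta_rigid_motion:
  fixes R :: "real^3^3"
  assumes "orthogonal_matrix R" "det R = 1"
    and "\<forall>k\<in>{1..6}. G k = R *v H k + t" and "i \<in> {2..6}"
  shows "Delta G i = Delta H i"
  unfolding Delta_def
proof (rule sum.cong[OF refl])
  fix j :: nat
  assume "j \<in> {1..6}"
  then have "{i - 1, i, nxt i, j, nxt j} \<subseteq> {1..6}"
    using assms(4) by (auto simp: nxt_def)
  then show "edge_contrib G i j = edge_contrib H i j"
    using assms by (intro edge_contrib_rigid_motion) auto
qed

lemma curl_rigid_motion:
  fixes R :: "real^3^3"
  assumes R: "orthogonal_matrix R" "det R = 1"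
    and G: "\<forall>k\<in>{1..6}. G k = R *v H k + t"
  shows "curl G = curl H"
proof -
  have diff: "G k - G 1 = R *v (H k - H 1)" if "k \<in> {1..6}" for k
    using G that by (simp add: matrix_vector_mult_diff_distrib)
  have "(R *v x) \<bullet> (R *v y) = x \<bullet> y" for x y
    using orthogonal_transformation_matrix_vector[OF R(1)]
    by (simp add: orthogonal_transformation_def)
  then show ?thesis
    using R diff[of 2] diff[of 3] diff[of 5]
    by (simp add: curl_def cross_rotation_matrix rotation_matrix_def)
qed

lemma equilateral_hexagon_rigid_motion:
  fixes R :: "real^3^3"
  assumes "orthogonal_matrix R"
    and G: "\<forall>k\<in>{1..6}. G k = R *v H k + t"
  shows "equilateral_hexagon G \<longleftrightarrow> equilateral_hexagon H"
proof -
  have "dist (G j) (G (nxt j)) = dist (H j) (H (nxt j))" if "j \<in> {1..6}" for j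
    using G that nxt_mem[OF that] orthogonal_transformation_matrix_vector[OF assms(1)]
    by (simp add: orthogonal_transformation_isometry dist_add_cancel2)
  then show ?thesis
    unfolding equilateral_hexagon_def by auto
qed

lemma edge_contrib_self: "edge_contrib G i i = 0"
  by (simp add: edge_contrib_def tri_normal_def Let_def dot_cross_self)

lemma edge_contrib_pred: "nxt (i - 1) = i \<Longrightarrow> edge_contrib G i (i - 1) = 0"
  by (simp add: edge_contrib_def tri_normal_def Let_def dot_cross_self)

lemma edge_contrib_eq_0_if_below:
  fixes w :: "real^3"
  assumes "w \<bullet> G i > 0" "w \<bullet> G (i - 1) = 0" "w \<bullet> G (nxt i) = 0"
    and "w \<bullet> G j \<le> 0" "w \<bullet> G (nxt j) \<le> 0"
  shows "edge_contrib G i j = 0"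
proof -
  have "cross_weight s = 0" if p: "G j + s *\<^sub>R (G (nxt j) - G j) \<in> tri_disk G i" for s
  proof (rule ccontr)
    assume "cross_weight s \<noteq> 0"
    then have s: "0 \<le> s" "s \<le> 1"
      by (auto simp: cross_weight_def split: if_splits)
    have "w \<bullet> (G j + s *\<^sub>R (G (nxt j) - G j)) > 0"
      using p assms unfolding tri_disk_def by (intro rel_interior_triangle_inner_gt) auto
    moreover have "w \<bullet> (G j + s *\<^sub>R (G (nxt j) - G j)) = (1 - s) * (w \<bullet> G j) + s * (w \<bullet> G (nxt j))"
      by (simp add: inner_add_right inner_diff_right algebra_simps)
    moreover have "(1 - s) * (w \<bullet> G j) \<le> 0" "s * (w \<bullet> G (nxt j)) \<le> 0"
      using s assms(4,5) by (auto simp: mult_nonneg_nonpos)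
    ultimately show False
      by linarith
  qed
  then show ?thesis
    by (simp add: edge_contrib_def Let_def)
qed

lemma inner_tri_normal_flat:
  assumes "G (i - 1) $ 3 = 0" "G i $ 3 = 0" "G (nxt i) $ 3 = 0"
  shows "x \<bullet> tri_normal G i = x $ 3 * tri_normal G i $ 3"
  using assms by (simp add: tri_normal_def cross3_simps)

lemma edge_contrib_flat_start:
  assumes "G (i - 1) $ 3 = 0" "G i $ 3 = 0" "G (nxt i) $ 3 = 0" "G j $ 3 = 0"
  shows "edge_contrib G i j =
    (if G j \<in> tri_disk G i then sgn (G (nxt j) $ 3 * tri_normal G i $ 3) / 2 else 0)"
  using assms by (auto simp: edge_contrib_def Let_def inner_tri_normal_flat cross_weight_def)

lemma edge_contrib_flat_end:
  assumes "G (i - 1) $ 3 = 0" "G i $ 3 = 0" "G (nxt i) $ 3 = 0" "G (nxt j) $ 3 = 0"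
  shows "edge_contrib G i j =
    (if G (nxt j) \<in> tri_disk G i then sgn (- G j $ 3 * tri_normal G i $ 3) / 2 else 0)"
  using assms by (auto simp: edge_contrib_def Let_def inner_tri_normal_flat cross_weight_def)

lemma Delta_eq_0_if_apex_separated:
  fixes w :: "real^3"
  assumes i: "i \<in> {2..6}"
    and "w \<bullet> G (i - 1) = 0" "w \<bullet> G (nxt i) = 0" "w \<bullet> G i > 0"
    and "\<forall>k\<in>{1..6} - {i}. w \<bullet> G k \<le> 0"
  shows "Delta G i = 0"
proof -
  have "edge_contrib G i j = 0" if j: "j \<in> {1..6}" for j
  proof (cases "j = i - 1 \<or> j = i")
    case True
    moreover have "nxt (i - 1) = i"
      using i unfolding nxt_def by (simp, linarith)
    ultimately show ?thesis
      using edge_contrib_self edge_contrib_pred by metis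
  next
    case False
    then have "j \<noteq> i" "nxt j \<noteq> i" "nxt j \<in> {1..6}"
      using i j by (auto simp: nxt_def)
    then show ?thesis
      using assms j by (intro edge_contrib_eq_0_if_below[of w]) auto
  qed
  then show ?thesis
    by (simp add: Delta_def)
qed

lemma Delta_eq_0_if_touching:
  assumes "equilateral_hexagon G"
    and cycle: "a \<in> {1..6}" "i - 1 = a" "nxt a = i" "nxt i = b" "nxt b = c" "nxt c = d" "nxt d = e"
      "nxt e = a"
    and plane: "G a $ 3 = 0" "G i $ 3 = 0" "G b $ 3 = 0" "G d $ 3 = 0"
    and above: "G c $ 3 > 0" "G e $ 3 > 0"
    and "G a \<noteq> G b"
  shows "Delta G i = 0"
proof -
  have "i \<in> {1..6}"
    using nxt_mem cycle by metis
  then have "dist (G i) (G a) = 1" "dist (G i) (G b) = 1"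
    using assms(1) cycle unfolding equilateral_hexagon_def by (metis dist_commute)+
  moreover have "tri_disk G i = rel_interior (convex hull {G a, G i, G b})"
    unfolding tri_disk_def cycle(2,4) ..
  ultimately have corners: "G a \<notin> tri_disk G i" "G b \<notin> tri_disk G i"
    using isosceles_base_vertex_notin_rel_interior[of "G i" "G a" "G b"]
      isosceles_base_vertex_notin_rel_interior[of "G i" "G b" "G a"] \<open>G a \<noteq> G b\<close>
    by (auto simp: insert_commute)
  have flat: "G (i - 1) $ 3 = 0" "G i $ 3 = 0" "G (nxt i) $ 3 = 0"
    using cycle plane by auto
  have "edge_contrib G i a = 0" "edge_contrib G i i = 0"
    using edge_contrib_pred edge_contrib_self cycle(2,3) by metis+
  moreover have "edge_contrib G i b = 0" "edge_contrib G i e = 0"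
    using corners cycle plane
    by (auto simp: edge_contrib_flat_start[OF flat] edge_contrib_flat_end[OF flat])
  moreover have "edge_contrib G i c + edge_contrib G i d = 0"
    using cycle plane above
    by (simp add: edge_contrib_flat_start[OF flat] edge_contrib_flat_end[OF flat] sgn_mult)
  ultimately show ?thesis
    unfolding Delta_def sum_hexagon_cycle[OF cycle(1,3-7)] by simp
qed

lemma even_vertices_above_if_Delta_nonzero:
  assumes "equilateral_hexagon G"
    and "G 1 $ 3 = 0" "G 3 $ 3 = 0" "G 5 $ 3 = 0" "G 3 \<noteq> G 5" "G 5 \<noteq> G 1"
    and "G 2 $ 3 > 0"
    and Delta: "Delta G 2 \<noteq> 0" "Delta G 4 \<noteq> 0" "Delta G 6 \<noteq> 0"
  shows "G 4 $ 3 > 0 \<and> G 6 $ 3 > 0"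
proof -
  have "G 4 $ 3 > 0 \<or> G 6 $ 3 > 0"
  proof (rule ccontr)
    assume "\<not> ?thesis"
    then have "Delta G 2 = 0"
      using assms by (intro Delta_eq_0_if_apex_separated[where w = "axis 3 1"])
        (unfold hexagon_indices, auto simp: inner_axis')
    with Delta show False
      by simp
  qed
  moreover have "\<not> (G 6 $ 3 < 0 \<and> G 4 $ 3 \<ge> 0)"
  proof
    assume "G 6 $ 3 < 0 \<and> G 4 $ 3 \<ge> 0"
    then have "Delta G 6 = 0"
      using assms by (intro Delta_eq_0_if_apex_separated[where w = "- axis 3 1"])
        (unfold hexagon_indices, auto simp: inner_axis')
    with Delta show False
      by simp
  qed
  moreover have "\<not> (G 4 $ 3 < 0 \<and> G 6 $ 3 \<ge> 0)"
  proof
    assume "G 4 $ 3 < 0 \<and> G 6 $ 3 \<ge> 0"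
    then have "Delta G 4 = 0"
      using assms by (intro Delta_eq_0_if_apex_separated[where w = "- axis 3 1"])
        (unfold hexagon_indices, auto simp: inner_axis')
    with Delta show False
      by simp
  qed
  moreover have "G 6 $ 3 \<noteq> 0" if "G 4 $ 3 > 0"
  proof
    assume "G 6 $ 3 = 0"
    then have "Delta G 6 = 0"
      using assms that by (intro Delta_eq_0_if_touching[of G 5 6 1 2 3 4]) auto
    with Delta show False
      by simp
  qed
  moreover have "G 4 $ 3 \<noteq> 0" if "G 6 $ 3 > 0"
  proof
    assume "G 4 $ 3 = 0"
    then have "Delta G 4 = 0"
      using assms that by (intro Delta_eq_0_if_touching[of G 3 4 5 6 1 2]) auto
    with Delta show False
      by simp
  qed
  ultimately show ?thesis
    by fastforce
qed

lemma Delta_nonzero_curl_one_if_JCC: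
  assumes "JCC H = (1, 1) \<or> JCC H = (-1, 1)"
  shows "Delta H 2 \<noteq> 0 \<and> Delta H 4 \<noteq> 0 \<and> Delta H 6 \<noteq> 0 \<and> curl H = 1"
proof -
  have product: "(Delta H 2)\<^sup>2 * (Delta H 4)\<^sup>2 * (Delta H 6)\<^sup>2 * curl H = 1"
    using assms by (auto simp: JCC_def)
  moreover have "0 \<le> (Delta H 2)\<^sup>2 * (Delta H 4)\<^sup>2 * (Delta H 6)\<^sup>2"
    by simp
  ultimately have "curl H > 0"
    by (metis mult_nonneg_nonpos not_le zero_less_one order.asym)
  then have "curl H = 1"
    by (simp add: curl_def sgn_real_def split: if_splits)
  with product show ?thesis
    by auto
qed

lemma curl_standard_position:
  assumes "standard_position G"
  shows "curl G = sgn (G 2 $ 3)"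
proof -
  have "cross3 (G 3 - G 1) (G 5 - G 1) \<bullet> (G 2 - G 1) = (G 3 $ 1 * G 5 $ 2) * G 2 $ 3"
    using assms by (simp add: standard_position_def cross3_simps)
  with assms show ?thesis
    unfolding curl_def by (simp add: sgn_mult standard_position_def)
qed

lemma perp_unit_flat:
  "a $ 3 = 0 \<Longrightarrow> b $ 3 = 0 \<Longrightarrow> c $ 3 = 0 \<Longrightarrow> perp_unit a b c $ 3 = 0"
  by (simp add: perp_unit_def Let_def midpoint_def)

lemma aa_angle_in_0_pi_if_above:
  assumes "is_aa_angle a b c p \<theta>" "a $ 3 = 0" "b $ 3 = 0" "c $ 3 = 0" "dist a b < 2"
    and "p $ 3 > 0"
  shows "\<theta> \<in> {0<..<pi}"
proof -
  have \<theta>: "0 \<le> \<theta>" "\<theta> < 2 * pi" and p: "p = midpoint a b +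
      ((1/2) * sqrt (4 - (dist a b)\<^sup>2)) *\<^sub>R (cos \<theta> *\<^sub>R perp_unit a b c + sin \<theta> *\<^sub>R axis 3 1)"
    using assms(1) by (auto simp: is_aa_angle_def)
  have "p $ 3 = (1/2) * sqrt (4 - (dist a b)\<^sup>2) * sin \<theta>"
    using perp_unit_flat[OF assms(2-4)] assms(2,3) by (simp add: p midpoint_def axis_def)
  then have "0 < sqrt (4 - (dist a b)\<^sup>2) * sin \<theta>"
    using assms(6) by simp
  moreover have "(dist a b)\<^sup>2 < 2\<^sup>2"
    using assms(5) by (intro power_strict_mono) auto
  ultimately have sin: "sin \<theta> > 0"
    by (simp add: zero_less_mult_iff)
  have "\<not> pi \<le> \<theta>"
  proof
    assume "pi \<le> \<theta>"
    then have "sin (\<theta> - pi) \<ge> 0"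
      using \<theta> by (intro sin_ge_zero) auto
    with sin show False
      by (simp add: sin_diff)
  qed
  moreover have "\<theta> \<noteq> 0"
    using sin by auto
  ultimately show ?thesis
    using \<theta> by auto
qed

theorem mainTheorem2:
  fixes H G :: hexagon and R :: "real^3^3" and t :: "real^3"
    and \<theta>1 \<theta>2 \<theta>3 :: real
  assumes "equilateral_hexagon H" and "embedded_hexagon H"
    and "orthogonal_matrix R" and "det R = 1"
    and "\<forall>j\<in>{1..6}. G j = R *v H j + t"
    and "standard_position G"
    and "\<not> collinear {G 1, G 3, G 5}"
    and "0 < dist (G 1) (G 3)" and "dist (G 1) (G 3) < 2"
    and "0 < dist (G 3) (G 5)" and "dist (G 3) (G 5) < 2"
    and "0 < dist (G 5) (G 1)" and "dist (G 5) (G 1) < 2"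
    and "is_aa_angle (G 1) (G 3) (G 5) (G 2) \<theta>1"
    and "is_aa_angle (G 3) (G 5) (G 1) (G 4) \<theta>2"
    and "is_aa_angle (G 5) (G 1) (G 3) (G 6) \<theta>3"
    and "JCC H = (1, 1) \<or> JCC H = (-1, 1)"
  shows "\<theta>1 \<in> {0<..<pi} \<and> \<theta>2 \<in> {0<..<pi} \<and> \<theta>3 \<in> {0<..<pi}"
proof -
  note motion = assms(3-5)
  have "Delta G 2 \<noteq> 0" "Delta G 4 \<noteq> 0" "Delta G 6 \<noteq> 0" "curl G = 1"
    using Delta_nonzero_curl_one_if_JCC[OF assms(17)] Delta_rigid_motion[OF motion] curl_rigid_motion[OF motion]
    by auto
  moreover have "equilateral_hexagon G"
    using assms(1) equilateral_hexagon_rigid_motion[OF assms(3,5)] by simp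
  moreover have flat: "G 1 $ 3 = 0" "G 3 $ 3 = 0" "G 5 $ 3 = 0"
    using assms(6) by (auto simp: standard_position_def)
  moreover have "G 2 $ 3 > 0"
    using curl_standard_position[OF assms(6)] \<open>curl G = 1\<close> by (simp add: sgn_1_pos)
  ultimately have "G 4 $ 3 > 0" "G 6 $ 3 > 0"
    using assms(10,12) even_vertices_above_if_Delta_nonzero[of G] by auto
  with flat \<open>G 2 $ 3 > 0\<close> assms(9,11,13-16) show ?thesis
    using aa_angle_in_0_pi_if_above by blast
qed

end
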